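(* Let $0<m<M$, let $A\in\mathcal{B}(\mathcal{H})$ satisfy $mI\le A\le MI$, and let $\varphi:\mathcal{B}(\mathcal{H})\to\mathcal{B}(\mathcal{K})$ be a positive linear map with $\varphi(I)=I$. Then for $t<0$, \begin{align*} \frac{1}{K(m,M,t)}\varphi(A^t) &\le \frac{1}{K(m,M,t)}\varphi\left(\left(M^{A-m}m^{M-A}\right)^{\frac{t}{M-m}}\right)\\ &\le \varphi(A)^t\\ &\le \left(M^{\varphi(A)-m}m^{M-\varphi(A)}\right)^{\frac{t}{M-m}}\\ &\le K(m,M,t)\,\varphi(A^t), \end{align*} where $$K(m,M,t)=\frac{mM^{t}-Mm^{t}}{(t-1)(M-m)}\left(\frac{t-1}{t}\,\frac{M^t-m^t}{mM^t-Mm^t}\right)^{t}.$$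
   Context: $\mathcal{H},\mathcal{K}$ are complex Hilbert spaces, $\mathcal{B}(\mathcal{H})$ the bounded operators on $\mathcal{H}$, and $X\le Y$ means $Y-X$ is positive semidefinite. Operator functions are defined by continuous functional calculus; for self-adjoint $X$ with spectrum in $[m,M]$, $\left(M^{X-m}m^{M-X}\right)^{\frac{t}{M-m}}$ denotes $g(X)$ with $g(x)=\left(M^{x-m}m^{M-x}\right)^{\frac{t}{M-m}}$. *)

theory Defs
  imports "HOL-Analysis.Analysis" "HOL-Computational_Algebra.Polynomial"
begin

class complex_hilbert = banach +
  fixes scaleC :: "complex \<Rightarrow> 'a \<Rightarrow> 'a"
    and cinner :: "'a \<Rightarrow> 'a \<Rightarrow> complex"
  assumes scaleC_of_real: "scaleC (complex_of_real r) x = scaleR r x"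
    and scaleC_add_right: "scaleC a (x + y) = scaleC a x + scaleC a y"
    and scaleC_add_left: "scaleC (a + b) x = scaleC a x + scaleC b x"
    and scaleC_scaleC: "scaleC a (scaleC b x) = scaleC (a * b) x"
    and scaleC_one: "scaleC 1 x = x"
    and cinner_add_left: "cinner (x + y) z = cinner x z + cinner y z"
    and cinner_scaleC_left: "cinner (scaleC a x) y = cnj a * cinner x y"
    and cinner_commute: "cinner x y = cnj (cinner y x)"
    and norm_cinner: "norm x = sqrt (Re (cinner x x))"

text \<open>B(H): the bounded complex-linear operators on H.\<close>
definition bops :: "('a::complex_hilbert \<Rightarrow>\<^sub>L 'a) set" where
  "bops = {X. \<forall>c x. blinfun_apply X (scaleC c x) = scaleC c (blinfun_apply X x)}"

definition op_scaleC :: "complex \<Rightarrow> ('a::complex_hilbert \<Rightarrow>\<^sub>L 'a) \<Rightarrow> ('a \<Rightarrow>\<^sub>L 'a)" where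
  "op_scaleC c X = Blinfun (\<lambda>x. scaleC c (blinfun_apply X x))"

definition self_adjoint :: "('a::complex_hilbert \<Rightarrow>\<^sub>L 'a) \<Rightarrow> bool" where
  "self_adjoint X \<longleftrightarrow> (\<forall>x y. cinner (blinfun_apply X x) y = cinner x (blinfun_apply X y))"

definition op_pos :: "('a::complex_hilbert \<Rightarrow>\<^sub>L 'a) \<Rightarrow> bool" where
  "op_pos X \<longleftrightarrow> (\<forall>x. Im (cinner x (blinfun_apply X x)) = 0 \<and> Re (cinner x (blinfun_apply X x)) \<ge> 0)"

definition op_le :: "('a::complex_hilbert \<Rightarrow>\<^sub>L 'a) \<Rightarrow> ('a \<Rightarrow>\<^sub>L 'a) \<Rightarrow> bool" where
  "op_le X Y \<longleftrightarrow> op_pos (Y - X)"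

definition op_pow :: "('a::complex_hilbert \<Rightarrow>\<^sub>L 'a) \<Rightarrow> nat \<Rightarrow> ('a \<Rightarrow>\<^sub>L 'a)" where
  "op_pow X n = ((\<lambda>Y. X o\<^sub>L Y) ^^ n) id_blinfun"

definition op_poly :: "real poly \<Rightarrow> ('a::complex_hilbert \<Rightarrow>\<^sub>L 'a) \<Rightarrow> ('a \<Rightarrow>\<^sub>L 'a)" where
  "op_poly p X = (\<Sum>i\<le>degree p. coeff p i *\<^sub>R op_pow X i)"

text \<open>Real spectrum of an operator (for self-adjoint operators the spectrum is real).\<close>
definition real_spectrum :: "('a::complex_hilbert \<Rightarrow>\<^sub>L 'a) \<Rightarrow> real set" where
  "real_spectrum X = {r. \<not> bij (blinfun_apply (X - r *\<^sub>R id_blinfun))}"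

text \<open>Continuous functional calculus for self-adjoint operators:
  \<open>g(X) = lim p_n(X)\<close> for any sequence of real polynomials \<open>p_n\<close> converging
  uniformly to g on the spectrum of X (Weierstrass).\<close>
definition opfun :: "(real \<Rightarrow> real) \<Rightarrow> ('a::complex_hilbert \<Rightarrow>\<^sub>L 'a) \<Rightarrow> ('a \<Rightarrow>\<^sub>L 'a)" where
  "opfun g X = (THE B. \<forall>p :: nat \<Rightarrow> real poly.
       uniform_limit (real_spectrum X) (\<lambda>n x. poly (p n) x) g sequentially \<longrightarrow>
       (\<lambda>n. op_poly (p n) X) \<longlonglongrightarrow> B)"

definition positive_unital_linear_map ::
  "(('a::complex_hilbert \<Rightarrow>\<^sub>L 'a) \<Rightarrow> ('b::complex_hilbert \<Rightarrow>\<^sub>L 'b)) \<Rightarrow> bool" where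
  "positive_unital_linear_map \<phi> \<longleftrightarrow>
     (\<forall>X\<in>bops. \<phi> X \<in> bops) \<and>
     (\<forall>X\<in>bops. \<forall>Y\<in>bops. \<phi> (X + Y) = \<phi> X + \<phi> Y) \<and>
     (\<forall>X\<in>bops. \<forall>c. \<phi> (op_scaleC c X) = op_scaleC c (\<phi> X)) \<and>
     (\<forall>X\<in>bops. op_pos X \<longrightarrow> op_pos (\<phi> X)) \<and>
     \<phi> id_blinfun = id_blinfun"

definition Kconst :: "real \<Rightarrow> real \<Rightarrow> real \<Rightarrow> real" where
  "Kconst m M t = (m * M powr t - M * m powr t) / ((t - 1) * (M - m)) *
     ((t - 1) / t * ((M powr t - m powr t) / (m * M powr t - M * m powr t))) powr t"

end

theory Submission
  imports Defs "HOL-Computational_Algebra.Fundamental_Theorem_Algebra"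
begin

(* Each of the four operator inequalities comes from a scalar inequality on [m, M]:
   for t < 0 and g(x) = (M^(x-m) m^(M-x))^(t/(M-m)) one has
   x^t \<le> g(x) \<le> \<alpha> x + \<beta> \<le> K x^t, where \<alpha> x + \<beta> is the chord of x^t
   (weighted AM-GM twice) and K is the least constant with the chord below K x^t
   (the curve K x^t touches the chord; Bernoulli's inequality).  Monotonicity of
   the continuous functional calculus turns these into operator inequalities for A
   and for \<phi>(A), whose spectrum again lies in [m, M]; linearity and unitality of \<phi>
   give \<phi>(\<beta> I + \<alpha> A) = \<beta> I + \<alpha> \<phi>(A), which links the two chains.

   Monotonicity of the functional calculus rests on the spectral lower bound
   p \<ge> c on the spectrum \<Longrightarrow> p(X) \<ge> c for real polynomials p.  The infimum a of the
   numerical range of p(X) makes p(X) - a not bounded below; factoring p - a into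
   real linear and quadratic factors, with no linear factor vanishing on the
   spectrum, would make it bounded below unless a \<ge> c.  Passing from
   "not bijective" to "not bounded below" uses the Hellinger-Toeplitz theorem,
   proved with the Baire category theorem. *)

lemma cinner_add_right: "cinner x (y + z) = cinner x y + cinner x z"
  by (metis cinner_commute cinner_add_left complex_cnj_add)

lemma cinner_scaleC_right: "cinner x (scaleC a y) = a * cinner x y"
  by (metis cinner_commute cinner_scaleC_left complex_cnj_cnj complex_cnj_mult)

lemma cinner_zero_left [simp]: "cinner 0 y = 0"
  using cinner_add_left[of 0 0 y] by simp

lemma cinner_zero_right [simp]: "cinner x 0 = 0"
  using cinner_add_right[of x 0 0] by simp

lemma cinner_minus_left: "cinner (- x) y = - cinner x y"
  using cinner_add_left[of x "- x" y] by (simp add: eq_neg_iff_add_eq_0 add.commute)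

lemma cinner_minus_right: "cinner x (- y) = - cinner x y"
  using cinner_add_right[of x y "- y"] by (simp add: eq_neg_iff_add_eq_0 add.commute)

lemma cinner_diff_left: "cinner (x - y) z = cinner x z - cinner y z"
  using cinner_add_left[of x "- y" z] by (simp add: cinner_minus_left)

lemma cinner_diff_right: "cinner x (y - z) = cinner x y - cinner x z"
  using cinner_add_right[of x y "- z"] by (simp add: cinner_minus_right)

lemma cinner_scaleR_left: "cinner (r *\<^sub>R x) y = of_real r * cinner x y"
  by (metis cinner_scaleC_left complex_cnj_complex_of_real scaleC_of_real)

lemma cinner_scaleR_right: "cinner x (r *\<^sub>R y) = of_real r * cinner x y"
  by (metis cinner_scaleC_right scaleC_of_real)

lemma Re_cinner_self: "Re (cinner x x) = (norm x)\<^sup>2"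
proof -
  have "Re (cinner x x) \<ge> 0"
    by (metis norm_cinner norm_ge_zero real_sqrt_ge_0_iff)
  thus ?thesis
    using norm_cinner[of x] by simp
qed

lemma power2_norm_add: "(norm (x + y))\<^sup>2 = (norm x)\<^sup>2 + (norm y)\<^sup>2 + 2 * Re (cinner x y)"
proof -
  have "cinner (x + y) (x + y) = cinner x x + cinner y y + (cinner x y + cinner y x)"
    by (simp add: cinner_add_left cinner_add_right)
  moreover have "Re (cinner y x) = Re (cinner x y)"
    using cinner_commute[of y x] by simp
  ultimately show ?thesis
    by (simp flip: Re_cinner_self)
qed

lemma power2_norm_diff: "(norm (x - y))\<^sup>2 = (norm x)\<^sup>2 + (norm y)\<^sup>2 - 2 * Re (cinner x y)"
  using power2_norm_add[of x "- y"] by (simp add: cinner_minus_right)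

lemma Re_cinner_le: "Re (cinner x y) \<le> norm x * norm y"
proof (cases "y = 0")
  case False
  define s where "s = Re (cinner x y) / (norm y)\<^sup>2"
  have ny: "norm y > 0"
    using False by simp
  have "0 \<le> (norm (x - s *\<^sub>R y))\<^sup>2"
    by simp
  also have "\<dots> = (norm x)\<^sup>2 + s\<^sup>2 * (norm y)\<^sup>2 - 2 * s * Re (cinner x y)"
    by (simp add: power2_norm_diff cinner_scaleR_right power_mult_distrib)
  also have "\<dots> = (norm x)\<^sup>2 - (Re (cinner x y))\<^sup>2 / (norm y)\<^sup>2"
    using ny by (simp add: s_def power2_eq_square field_simps)
  finally have "(Re (cinner x y))\<^sup>2 \<le> (norm x * norm y)\<^sup>2"
    using ny by (simp add: field_simps power_mult_distrib)
  thus ?thesis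
    using abs_le_square_iff[of "Re (cinner x y)" "norm x * norm y"] by (simp add: abs_le_iff)
qed simp

lemma abs_Re_cinner_le: "\<bar>Re (cinner x y)\<bar> \<le> norm x * norm y"
  using Re_cinner_le[of x y] Re_cinner_le[of x "- y"] by (simp add: cinner_minus_right)

lemma norm_scaleC: "norm (scaleC c x) = cmod c * norm x"
proof -
  have "(norm (scaleC c x))\<^sup>2 = Re ((c * cnj c) * cinner x x)"
    by (simp add: cinner_scaleC_left cinner_scaleC_right mult_ac flip: Re_cinner_self)
  also have "\<dots> = (cmod c * norm x)\<^sup>2"
    by (simp add: complex_norm_square[symmetric] Re_cinner_self power_mult_distrib)
  finally show ?thesis
    by (simp add: power2_eq_iff_nonneg)
qed

lemma abs_Im_cinner_le: "\<bar>Im (cinner x y)\<bar> \<le> norm x * norm y"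
  using abs_Re_cinner_le[of x "scaleC \<i> y"] by (simp add: cinner_scaleC_right norm_scaleC)

lemma bounded_bilinear_Re_cinner: "bounded_bilinear (\<lambda>x y. Re (cinner x y))"
proof (rule bounded_bilinear.intro)
  show "\<exists>K. \<forall>x y. norm (Re (cinner x y)) \<le> norm x * norm y * K"
    by (intro exI[of _ 1]) (simp add: abs_Re_cinner_le)
qed (simp_all add: cinner_add_left cinner_add_right cinner_scaleR_left cinner_scaleR_right)

lemma bounded_bilinear_Im_cinner: "bounded_bilinear (\<lambda>x y. Im (cinner x y))"
proof (rule bounded_bilinear.intro)
  show "\<exists>K. \<forall>x y. norm (Im (cinner x y)) \<le> norm x * norm y * K"
    by (intro exI[of _ 1]) (simp add: abs_Im_cinner_le)
qed (simp_all add: cinner_add_left cinner_add_right cinner_scaleR_left cinner_scaleR_right)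

lemma scaleC_zero [simp]: "scaleC c 0 = 0"
  using scaleC_add_right[of c 0 0] by simp

lemma scaleC_minus: "scaleC c (- x) = - scaleC c x"
  using scaleC_add_right[of c x "- x"] by (simp add: eq_neg_iff_add_eq_0 add.commute)

lemma scaleC_diff: "scaleC c (x - y) = scaleC c x - scaleC c y"
  by (metis diff_conv_add_uminus scaleC_add_right scaleC_minus)

lemma scaleC_scaleR: "scaleC c (r *\<^sub>R x) = r *\<^sub>R scaleC c x"
  by (metis scaleC_of_real scaleC_scaleC mult.commute)

lemma bounded_linear_scaleC: "bounded_linear (scaleC c :: 'a::complex_hilbert \<Rightarrow> 'a)"
  by (rule bounded_linear_intro[of _ "cmod c"])
    (auto simp: scaleC_add_right scaleC_scaleR norm_scaleC)

section \<open>Bounded operators\<close>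

lemmas blinfun_apply_arith = plus_blinfun.rep_eq minus_blinfun.rep_eq scaleR_blinfun.rep_eq
  uminus_blinfun.rep_eq zero_blinfun.rep_eq blinfun.add_right blinfun.diff_right
  blinfun.scaleR_right blinfun.minus_right

lemma bops_add: "X \<in> bops \<Longrightarrow> Y \<in> bops \<Longrightarrow> X + Y \<in> bops"
  by (simp add: bops_def blinfun_apply_arith scaleC_add_right)

lemma bops_diff: "X \<in> bops \<Longrightarrow> Y \<in> bops \<Longrightarrow> X - Y \<in> bops"
  by (simp add: bops_def blinfun_apply_arith scaleC_diff)

lemma bops_scaleR: "X \<in> bops \<Longrightarrow> r *\<^sub>R X \<in> bops"
  by (simp add: bops_def blinfun_apply_arith scaleC_scaleR)

lemma bops_id: "id_blinfun \<in> bops"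
  by (simp add: bops_def)

lemma bops_zero: "0 \<in> bops"
  by (simp add: bops_def)

lemma bops_compose: "X \<in> bops \<Longrightarrow> Y \<in> bops \<Longrightarrow> X o\<^sub>L Y \<in> bops"
  by (simp add: bops_def)

lemma bops_closed:
  assumes lim: "Y \<longlonglongrightarrow> B" and Y: "\<And>n. Y n \<in> bops"
  shows "B \<in> bops"
  unfolding bops_def
proof (intro CollectI allI)
  fix c x
  have "(\<lambda>n. Y n (scaleC c x)) \<longlonglongrightarrow> B (scaleC c x)"
    by (intro blinfun.tendsto lim tendsto_const)
  moreover have "(\<lambda>n. Y n (scaleC c x)) = (\<lambda>n. scaleC c (Y n x))"
    using Y by (simp add: bops_def)
  moreover have "(\<lambda>n. scaleC c (Y n x)) \<longlonglongrightarrow> scaleC c (B x)"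
    by (intro bounded_linear.tendsto[OF bounded_linear_scaleC] blinfun.tendsto lim tendsto_const)
  ultimately show "B (scaleC c x) = scaleC c (B x)"
    using LIMSEQ_unique by metis
qed

lemma self_adjointD: "self_adjoint X \<Longrightarrow> cinner (X x) y = cinner x (X y)"
  by (simp add: self_adjoint_def)

lemma self_adjoint_Im_cinner: "self_adjoint X \<Longrightarrow> Im (cinner x (X x)) = 0"
  by (metis self_adjointD cinner_commute Reals_cnj_iff complex_is_Real_iff)

lemma self_adjoint_Re_cinner_commute:
  assumes "self_adjoint X"
  shows "Re (cinner x (X y)) = Re (cinner y (X x))"
proof -
  have "cinner x (X y) = cnj (cinner y (X x))"
    using self_adjointD[OF assms, of x y] cinner_commute by metis
  thus ?thesis
    by simp
qed

lemma self_adjoint_Re_cinner_square: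
  "self_adjoint X \<Longrightarrow> Re (cinner x (X (X x))) = (norm (X x))\<^sup>2"
  by (metis self_adjointD Re_cinner_self)

lemma self_adjoint_add: "self_adjoint X \<Longrightarrow> self_adjoint Y \<Longrightarrow> self_adjoint (X + Y)"
  by (simp add: self_adjoint_def blinfun_apply_arith cinner_add_left cinner_add_right)

lemma self_adjoint_diff: "self_adjoint X \<Longrightarrow> self_adjoint Y \<Longrightarrow> self_adjoint (X - Y)"
  by (simp add: self_adjoint_def blinfun_apply_arith cinner_diff_left cinner_diff_right)

lemma self_adjoint_scaleR: "self_adjoint X \<Longrightarrow> self_adjoint (r *\<^sub>R X)"
  by (simp add: self_adjoint_def blinfun_apply_arith cinner_scaleR_left cinner_scaleR_right)

lemma self_adjoint_id: "self_adjoint id_blinfun"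
  by (simp add: self_adjoint_def)

lemma self_adjoint_zero: "self_adjoint 0"
  by (simp add: self_adjoint_def)

lemma self_adjoint_compose_commute:
  assumes "self_adjoint X" "self_adjoint Y" "X o\<^sub>L Y = Y o\<^sub>L X"
  shows "self_adjoint (X o\<^sub>L Y)"
  unfolding self_adjoint_def
proof (intro allI)
  fix x y
  have "cinner ((X o\<^sub>L Y) x) y = cinner x (Y (X y))"
    using assms(1,2) by (simp add: self_adjointD)
  also have "Y (X y) = (X o\<^sub>L Y) y"
    using assms(3) by (metis blinfun_apply_blinfun_compose)
  finally show "cinner ((X o\<^sub>L Y) x) y = cinner x ((X o\<^sub>L Y) y)" .
qed

lemma self_adjointI_real_form:
  assumes X: "X \<in> bops" and real: "\<And>x. Im (cinner x (X x)) = 0"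
  shows "self_adjoint X"
proof -
  have lin: "X (scaleC c x) = scaleC c (X x)" for c x
    using X by (simp add: bops_def)
  have "cinner x (X y) = cnj (cinner y (X x))" for x y
  proof -
    have "Im (cinner x (X y)) + Im (cinner y (X x)) = 0"
      using real[of "x + y"] real[of x] real[of y]
      by (simp add: blinfun.add_right cinner_add_left cinner_add_right)
    moreover have "Re (cinner x (X y)) - Re (cinner y (X x)) = 0"
      using real[of "x + scaleC \<i> y"] real[of x] real[of "scaleC \<i> y"]
      by (simp add: blinfun.add_right cinner_add_left cinner_add_right lin
          cinner_scaleC_left cinner_scaleC_right)
    ultimately show ?thesis
      by (simp add: complex_eq_iff)
  qed
  thus ?thesis
    unfolding self_adjoint_def by (metis cinner_commute)
qed

lemma op_le_iff: "op_le X Y \<longleftrightarrow> (\<forall>x. Im (cinner x (Y x)) = Im (cinner x (X x)) \<and>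
    Re (cinner x (X x)) \<le> Re (cinner x (Y x)))"
  by (simp add: op_le_def op_pos_def blinfun_apply_arith cinner_diff_right)

lemma op_le_trans: "op_le X Y \<Longrightarrow> op_le Y Z \<Longrightarrow> op_le X Z"
  unfolding op_le_iff by (metis order_trans)

lemma op_le_scaleR: "op_le X Y \<Longrightarrow> 0 \<le> c \<Longrightarrow> op_le (c *\<^sub>R X) (c *\<^sub>R Y)"
  unfolding op_le_iff by (simp add: blinfun_apply_arith cinner_scaleR_right mult_left_mono)

lemma op_le_scaleR_divide:
  assumes "0 < c" "op_le X (c *\<^sub>R Y)"
  shows "op_le ((1 / c) *\<^sub>R X) Y"
  using op_le_scaleR[OF assms(2), of "1 / c"] assms(1) by simp

lemma op_pos_self_adjoint: "X \<in> bops \<Longrightarrow> op_pos X \<Longrightarrow> self_adjoint X"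
  by (rule self_adjointI_real_form) (auto simp: op_pos_def)

lemma Re_cinner_apply_le:
  fixes Y :: "'a::complex_hilbert \<Rightarrow>\<^sub>L 'a"
  shows "Re (cinner x (Y x)) \<le> norm Y * (norm x)\<^sup>2"
  using Re_cinner_le[of x "Y x"] norm_blinfun[of Y x]
  by (simp add: power2_eq_square mult_left_mono mult_ac order_trans)

lemma abs_Re_cinner_apply_le:
  fixes Y :: "'a::complex_hilbert \<Rightarrow>\<^sub>L 'a"
  shows "\<bar>Re (cinner x (Y x))\<bar> \<le> norm Y * (norm x)\<^sup>2"
  using Re_cinner_apply_le[of x Y] Re_cinner_apply_le[of x "- Y"]
  by (simp add: blinfun_apply_arith cinner_minus_right)

lemma Re_cinner_apply_scaleR:
  fixes T :: "'a::complex_hilbert \<Rightarrow>\<^sub>L 'a"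
  shows "Re (cinner (c *\<^sub>R x) (T (c *\<^sub>R x))) = c\<^sup>2 * Re (cinner x (T x))"
  by (simp add: blinfun_apply_arith cinner_scaleR_left cinner_scaleR_right power2_eq_square)

lemma norm_self_adjoint_le:
  assumes sa: "self_adjoint T" and c: "0 \<le> c"
    and form: "\<And>x. \<bar>Re (cinner x (T x))\<bar> \<le> c * (norm x)\<^sup>2"
  shows "norm T \<le> c"
proof (rule norm_blinfun_bound[OF c])
  fix x
  show "norm (T x) \<le> c * norm x"
  proof (cases "T x = 0")
    case False
    \<comment> \<open>polarisation with \<open>y\<close> the rescaling of \<open>T x\<close> to the length of \<open>x\<close>\<close>
    define y where "y = (norm x / norm (T x)) *\<^sub>R T x"
    have nT: "norm (T x) > 0"
      using False by simp
    have ny: "norm y = norm x"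
      using nT by (simp add: y_def)
    have "4 * Re (cinner y (T x)) =
        Re (cinner (x + y) (T (x + y))) - Re (cinner (x - y) (T (x - y)))"
      using self_adjoint_Re_cinner_commute[OF sa, of x y]
      by (simp add: blinfun.add_right blinfun.diff_right cinner_add_left cinner_add_right
          cinner_diff_left cinner_diff_right)
    also have "\<dots> \<le> c * (norm (x + y))\<^sup>2 + c * (norm (x - y))\<^sup>2"
      using form[of "x + y"] form[of "x - y"] by (simp add: abs_le_iff)
    also have "\<dots> = 4 * c * (norm x)\<^sup>2"
      using ny by (simp add: power2_norm_add power2_norm_diff algebra_simps)
    finally have "Re (cinner y (T x)) \<le> c * (norm x)\<^sup>2"
      by simp
    moreover have "Re (cinner y (T x)) = norm x * norm (T x)"
      using nT by (simp add: y_def cinner_scaleR_left Re_cinner_self power2_eq_square)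
    moreover have "norm x > 0"
      using False by (metis blinfun.zero_right zero_less_norm_iff)
    ultimately show ?thesis
      by (simp add: power2_eq_square mult.assoc mult.commute[of c])
  qed (use c in simp)
qed

section \<open>Operators bounded below\<close>

definition bounded_below_op :: "('a::real_normed_vector \<Rightarrow>\<^sub>L 'b::real_normed_vector) \<Rightarrow> bool" where
  "bounded_below_op Y \<longleftrightarrow> (\<exists>k>0. \<forall>x. k * norm x \<le> norm (Y x))"

lemma bounded_below_op_inj: "bounded_below_op Y \<Longrightarrow> inj (blinfun_apply Y)"
proof (rule injI)
  fix x y
  assume "bounded_below_op Y" "Y x = Y y"
  then obtain k where "k > 0" "k * norm (x - y) \<le> 0"
    unfolding bounded_below_op_def by (metis blinfun.diff_right norm_zero right_minus_eq)
  thus "x = y"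
    by (simp add: mult_le_0_iff)
qed

lemma bounded_below_op_compose:
  assumes "bounded_below_op X" "bounded_below_op Y"
  shows "bounded_below_op (X o\<^sub>L Y)"
proof -
  obtain a where a: "a > 0" "\<And>x. a * norm x \<le> norm (X x)"
    using assms(1) unfolding bounded_below_op_def by blast
  obtain b where b: "b > 0" "\<And>x. b * norm x \<le> norm (Y x)"
    using assms(2) unfolding bounded_below_op_def by blast
  have "a * b * norm x \<le> norm ((X o\<^sub>L Y) x)" for x
  proof -
    have "a * (b * norm x) \<le> a * norm (Y x)"
      using a(1) b(2) by (simp add: mult_left_mono)
    also have "\<dots> \<le> norm (X (Y x))"
      by (rule a(2))
    finally show ?thesis
      by (simp add: mult.assoc)
  qed
  thus ?thesis
    unfolding bounded_below_op_def using a b by (intro exI[of _ "a * b"]) auto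
qed

lemma bounded_below_op_scaleR_id: "c \<noteq> 0 \<Longrightarrow> bounded_below_op (c *\<^sub>R id_blinfun)"
  unfolding bounded_below_op_def by (intro exI[of _ "\<bar>c\<bar>"]) (simp add: blinfun_apply_arith)

lemma bounded_below_opI_coercive:
  fixes Y :: "'a::complex_hilbert \<Rightarrow>\<^sub>L 'a"
  assumes e: "0 < e" and coercive: "\<And>x. e * (norm x)\<^sup>2 \<le> Re (cinner x (Y x))"
  shows "bounded_below_op Y"
  unfolding bounded_below_op_def
proof (intro exI[of _ e] conjI allI e)
  fix x
  have "e * (norm x)\<^sup>2 \<le> norm x * norm (Y x)"
    using coercive[of x] Re_cinner_le[of x "Y x"] by linarith
  thus "e * norm x \<le> norm (Y x)"
    by (cases "x = 0") (auto simp: power2_eq_square mult.assoc[symmetric])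
qed

lemma surj_if_norm_id_diff_less_one:
  fixes Y :: "'a::banach \<Rightarrow>\<^sub>L 'a"
  assumes "norm (id_blinfun - Y) < 1"
  shows "surj (blinfun_apply Y)"
proof (rule surjI)
  fix b
  define L where "L = id_blinfun - Y"
  have "\<exists>!x. L x + b = x"
  proof (rule banach_fix_type[OF norm_ge_zero assms[folded L_def]], intro allI)
    fix x y
    have "dist (L x + b) (L y + b) = norm (L (x - y))"
      by (simp add: dist_norm blinfun.diff_right)
    also have "\<dots> \<le> norm L * dist x y"
      by (simp add: dist_norm norm_blinfun)
    finally show "dist (L x + b) (L y + b) \<le> norm L * dist x y" .
  qed
  then obtain x where "L x + b = x"
    by blast
  hence "Y x = b"
    by (simp add: L_def blinfun_apply_arith)
  thus "Y (inv (blinfun_apply Y) b) = b"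
    by (metis f_inv_into_f rangeI)
qed

lemma coercive_self_adjoint_bij:
  fixes Y :: "'a::complex_hilbert \<Rightarrow>\<^sub>L 'a"
  assumes sa: "self_adjoint Y" and e: "0 < e"
    and coercive: "\<And>x. e * (norm x)\<^sup>2 \<le> Re (cinner x (Y x))"
  shows "bij (blinfun_apply Y)"
proof (rule bijI)
  show "inj (blinfun_apply Y)"
    by (rule bounded_below_op_inj[OF bounded_below_opI_coercive[OF e coercive]])
  define C where "C = norm Y + e"
  have C: "C > 0" "e \<le> C"
    using e norm_ge_zero[of Y] unfolding C_def by linarith+
  have "norm (id_blinfun - (1 / C) *\<^sub>R Y) \<le> 1 - e / C"
  proof (rule norm_self_adjoint_le)
    show "self_adjoint (id_blinfun - (1 / C) *\<^sub>R Y)"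
      by (intro self_adjoint_diff self_adjoint_id self_adjoint_scaleR sa)
    show "0 \<le> 1 - e / C"
      using C by simp
    fix x :: 'a
    have "0 \<le> e * (norm x)\<^sup>2"
      using e by simp
    hence "Re (cinner x (Y x)) \<le> C * (norm x)\<^sup>2"
      using Re_cinner_apply_le[of x Y] by (simp add: C_def distrib_right)
    thus "\<bar>Re (cinner x ((id_blinfun - (1 / C) *\<^sub>R Y) x))\<bar> \<le> (1 - e / C) * (norm x)\<^sup>2"
      using coercive[of x] C
      by (simp add: blinfun_apply_arith cinner_diff_right cinner_scaleR_right Re_cinner_self
          abs_le_iff field_simps)
  qed
  also have "\<dots> < 1"
    using C e by simp
  finally have surj: "surj (blinfun_apply ((1 / C) *\<^sub>R Y))"
    by (rule surj_if_norm_id_diff_less_one)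
  show "surj (blinfun_apply Y)"
    unfolding surj_def
  proof
    fix b
    obtain x where "((1 / C) *\<^sub>R Y) x = (1 / C) *\<^sub>R b"
      using surj by (metis surjD)
    hence "b = Y x"
      using C by (simp add: blinfun_apply_arith)
    thus "\<exists>x. b = Y x" ..
  qed
qed

lemma closed_cover_interior_nonempty:
  fixes F :: "nat \<Rightarrow> 'a::complete_space set"
  assumes "\<And>k. closed (F k)" and "(\<Union>k. F k) = UNIV"
  shows "\<exists>k. interior (F k) \<noteq> {}"
proof (rule ccontr)
  assume "\<nexists>k. interior (F k) \<noteq> {}"
  hence "euclidean interior_of \<Union>(range F) = {}"
    by (intro Baire_category_alt)
      (auto simp: completely_metrizable_space_euclidean assms(1) closed_closedin[symmetric])
  thus False
    using assms(2) by simp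
qed

lemma linear_bounded_on_unit_ball:
  fixes f :: "'a::real_normed_vector \<Rightarrow> 'b::real_normed_vector"
  assumes f: "linear f" and bound: "\<And>x. norm x \<le> 1 \<Longrightarrow> norm (f x) \<le> B"
  shows "bounded_linear f"
proof -
  interpret linear f by fact
  have "norm (f x) \<le> norm x * B" for x
  proof (cases "x = 0")
    case False
    have "f x = norm x *\<^sub>R f ((1 / norm x) *\<^sub>R x)"
      using False by (simp flip: scale)
    moreover have "norm (f ((1 / norm x) *\<^sub>R x)) \<le> B"
      using False by (intro bound) simp
    ultimately show ?thesis
      by (simp add: mult_left_mono)
  qed simp
  thus ?thesis
    by (intro bounded_linear_intro[of f B]) (simp_all add: add scale)
qed

lemma norm_le_if_Re_cinner_bounded_on_ball:
  assumes r: "0 < r" and bound: "\<And>z. z \<in> ball z0 r \<Longrightarrow> \<bar>Re (cinner v z)\<bar> \<le> k"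
  shows "norm v \<le> 4 * k / r"
proof (cases "v = 0")
  case False
  define w where "w = (r / 2 / norm v) *\<^sub>R v"
  have "\<bar>Re (cinner v (z0 + w))\<bar> \<le> k" "\<bar>Re (cinner v z0)\<bar> \<le> k"
    using r False by (auto intro!: bound simp: w_def dist_norm)
  moreover have "Re (cinner v (z0 + w)) = Re (cinner v z0) + r / 2 * norm v"
    using False by (simp add: w_def cinner_add_right cinner_scaleR_right Re_cinner_self
        power2_eq_square)
  ultimately have "r / 2 * norm v \<le> 2 * k"
    by (simp add: abs_le_iff)
  thus ?thesis
    using r by (simp add: field_simps)
next
  case True
  thus ?thesis
    using bound[of z0] r by simp
qed

text \<open>Hellinger-Toeplitz: by Baire, one of the closed sets \<open>F k\<close> contains a ball.\<close>

lemma symmetric_linear_bounded: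
  fixes S :: "'a::complex_hilbert \<Rightarrow> 'a"
  assumes lin: "linear S" and sym: "\<And>x y. cinner (S x) y = cinner x (S y)"
  shows "bounded_linear S"
proof -
  define F where "F k = {z. \<forall>x. norm x \<le> 1 \<longrightarrow> \<bar>Re (cinner (S x) z)\<bar> \<le> real k}" for k :: nat
  have "closed (F k)" for k
  proof -
    have "closed {z. \<bar>Re (cinner (S x) z)\<bar> \<le> real k}" for x
      by (intro closed_Collect_le continuous_intros linear_continuous_on
          bounded_bilinear.bounded_linear_right[OF bounded_bilinear_Re_cinner])
    moreover have "F k = (\<Inter>x\<in>{x. norm x \<le> 1}. {z. \<bar>Re (cinner (S x) z)\<bar> \<le> real k})"
      by (auto simp: F_def)
    ultimately show ?thesis
      by auto
  qed
  moreover have "z \<in> F (nat \<lceil>norm (S z)\<rceil>)" for z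
    unfolding F_def
  proof safe
    fix x :: 'a
    assume "norm x \<le> 1"
    have "\<bar>Re (cinner (S x) z)\<bar> \<le> norm x * norm (S z)"
      using abs_Re_cinner_le by (simp add: sym)
    also have "\<dots> \<le> norm (S z)"
      using \<open>norm x \<le> 1\<close> by (simp add: mult_left_le_one_le)
    also have "\<dots> \<le> real (nat \<lceil>norm (S z)\<rceil>)"
      by (rule real_nat_ceiling_ge)
    finally show "\<bar>Re (cinner (S x) z)\<bar> \<le> real (nat \<lceil>norm (S z)\<rceil>)" .
  qed
  hence "(\<Union>k. F k) = UNIV"
    by blast
  ultimately obtain k z0 where "z0 \<in> interior (F k)"
    using closed_cover_interior_nonempty by blast
  then obtain r where r: "r > 0" "ball z0 r \<subseteq> F k"
    by (meson mem_interior)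
  have "norm (S x) \<le> 4 * real k / r" if "norm x \<le> 1" for x
    using r that by (intro norm_le_if_Re_cinner_bounded_on_ball) (auto simp: F_def)
  thus ?thesis
    by (rule linear_bounded_on_unit_ball[OF lin])
qed

lemma self_adjoint_bij_bounded_below:
  fixes Y :: "'a::complex_hilbert \<Rightarrow>\<^sub>L 'a"
  assumes sa: "self_adjoint Y" and bij: "bij (blinfun_apply Y)"
  shows "bounded_below_op Y"
proof -
  define S where "S = inv (blinfun_apply Y)"
  have YS: "Y (S x) = x" and SY: "S (Y x) = x" for x
    using bij by (simp_all add: S_def bij_is_surj surj_f_inv_f bij_is_inj)
  have "linear S"
    by (rule linearI) (metis SY YS blinfun.add_right, metis SY YS blinfun.scaleR_right)
  moreover have "cinner (S x) y = cinner x (S y)" for x y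
    by (metis YS self_adjointD[OF sa])
  ultimately obtain K where K: "K > 0" "\<And>x. norm (S x) \<le> norm x * K"
    using symmetric_linear_bounded bounded_linear.pos_bounded by blast
  have "(1 / K) * norm x \<le> norm (Y x)" for x
    using K(2)[of "Y x"] K(1) by (simp add: SY field_simps)
  thus ?thesis
    unfolding bounded_below_op_def using K(1) by (intro exI[of _ "1 / K"]) auto
qed

lemma op_le_bounds_self_adjoint_spectrum:
  fixes X :: "'a::complex_hilbert \<Rightarrow>\<^sub>L 'a"
  assumes X: "X \<in> bops" and lower: "op_le (m *\<^sub>R id_blinfun) X"
    and upper: "op_le X (M *\<^sub>R id_blinfun)"
  shows "self_adjoint X" "real_spectrum X \<subseteq> {m..M}"
proof -
  have "self_adjoint (X - m *\<^sub>R id_blinfun + m *\<^sub>R id_blinfun)"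
    using lower
    by (intro self_adjoint_add self_adjoint_scaleR self_adjoint_id op_pos_self_adjoint
        bops_diff bops_scaleR bops_id X) (simp add: op_le_def)
  thus sa: "self_adjoint X"
    by simp
  have "bij (blinfun_apply (X - r *\<^sub>R id_blinfun))" if r: "r < m \<or> M < r" for r
    using r
  proof
    assume "r < m"
    show ?thesis
    proof (rule coercive_self_adjoint_bij)
      fix x
      show "(m - r) * (norm x)\<^sup>2 \<le> Re (cinner x ((X - r *\<^sub>R id_blinfun) x))"
        using lower unfolding op_le_iff
        by (simp add: blinfun_apply_arith cinner_diff_right cinner_scaleR_right Re_cinner_self
            left_diff_distrib)
    qed (use \<open>r < m\<close> in \<open>auto intro: self_adjoint_diff self_adjoint_scaleR self_adjoint_id sa\<close>)
  next
    assume "M < r"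
    have "bij (blinfun_apply (r *\<^sub>R id_blinfun - X))"
    proof (rule coercive_self_adjoint_bij)
      fix x
      show "(r - M) * (norm x)\<^sup>2 \<le> Re (cinner x ((r *\<^sub>R id_blinfun - X) x))"
        using upper unfolding op_le_iff
        by (simp add: blinfun_apply_arith cinner_diff_right cinner_scaleR_right Re_cinner_self
            left_diff_distrib)
    qed (use \<open>M < r\<close> in \<open>auto intro: self_adjoint_diff self_adjoint_scaleR self_adjoint_id sa\<close>)
    moreover have "blinfun_apply (X - r *\<^sub>R id_blinfun) = uminus \<circ> (r *\<^sub>R id_blinfun - X)"
      by (rule ext) (simp add: blinfun_apply_arith)
    ultimately show ?thesis
      using bij_comp[OF _ bij_uminus] by metis
  qed
  thus "real_spectrum X \<subseteq> {m..M}"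
    by (force simp: real_spectrum_def)
qed

lemma op_pow_0 [simp]: "op_pow X 0 = id_blinfun"
  by (simp add: op_pow_def)

lemma op_pow_Suc: "op_pow X (Suc n) = X o\<^sub>L op_pow X n"
  by (simp add: op_pow_def)

lemma op_poly_conv_sum:
  assumes "degree p \<le> n"
  shows "op_poly p X = (\<Sum>i\<le>n. coeff p i *\<^sub>R op_pow X i)"
proof -
  have "(\<Sum>i\<le>n. coeff p i *\<^sub>R op_pow X i) = (\<Sum>i\<le>degree p. coeff p i *\<^sub>R op_pow X i)"
    by (rule sum.mono_neutral_right) (use assms in \<open>auto simp: coeff_eq_0\<close>)
  thus ?thesis
    by (simp add: op_poly_def)
qed

lemma op_poly_0 [simp]: "op_poly 0 X = 0"
  by (simp add: op_poly_def)

lemma op_poly_const: "op_poly [:c:] X = c *\<^sub>R id_blinfun"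
  by (simp add: op_poly_def)

lemma op_poly_add: "op_poly (p + q) X = op_poly p X + op_poly q X"
proof -
  define n where "n = max (degree p) (degree q)"
  have "degree (p + q) \<le> n"
    by (simp add: n_def degree_add_le)
  thus ?thesis
    by (simp add: op_poly_conv_sum[of _ n] n_def scaleR_add_left sum.distrib)
qed

lemma op_poly_smult: "op_poly (smult a p) X = a *\<^sub>R op_poly p X"
  by (simp add: op_poly_conv_sum[of _ "degree p"] scaleR_sum_right op_poly_def)

lemma op_poly_minus: "op_poly (- p) X = - op_poly p X"
  using op_poly_smult[of "- 1" p X] by simp

lemma op_poly_diff: "op_poly (p - q) X = op_poly p X - op_poly q X"
  using op_poly_add[of p "- q" X] by (simp add: op_poly_minus)

lemma op_poly_pCons: "op_poly (pCons a p) X = a *\<^sub>R id_blinfun + (X o\<^sub>L op_poly p X)"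
proof -
  have "op_poly (pCons a p) X = (\<Sum>i\<le>Suc (degree p). coeff (pCons a p) i *\<^sub>R op_pow X i)"
    by (rule op_poly_conv_sum) simp
  also have "\<dots> = a *\<^sub>R id_blinfun + (\<Sum>i\<le>degree p. coeff p i *\<^sub>R op_pow X (Suc i))"
    unfolding sum.atMost_Suc_shift by simp
  also have "(\<Sum>i\<le>degree p. coeff p i *\<^sub>R op_pow X (Suc i)) = X o\<^sub>L op_poly p X"
    by (rule blinfun_eqI) (simp add: op_poly_def op_pow_Suc blinfun.sum_left
        blinfun.sum_right blinfun_apply_arith)
  finally show ?thesis .
qed

lemma op_poly_linear: "op_poly [:b, a:] X = b *\<^sub>R id_blinfun + a *\<^sub>R X"
  by (rule blinfun_eqI) (simp add: op_poly_pCons op_poly_const blinfun_apply_arith)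

lemma op_poly_mult: "op_poly (p * q) X = op_poly p X o\<^sub>L op_poly q X"
proof (induction p rule: pCons_induct)
  case (pCons a p)
  have "op_poly (pCons a p * q) X = a *\<^sub>R op_poly q X + (X o\<^sub>L (op_poly p X o\<^sub>L op_poly q X))"
    by (simp add: op_poly_add op_poly_smult op_poly_pCons pCons.IH)
  also have "\<dots> = op_poly (pCons a p) X o\<^sub>L op_poly q X"
    by (rule blinfun_eqI) (simp add: op_poly_pCons blinfun_apply_arith)
  finally show ?case .
qed (simp add: blinfun_eqI)

lemma op_poly_commute: "X o\<^sub>L op_poly p X = op_poly p X o\<^sub>L X"
  using op_poly_mult[of "[:0, 1:]" p X] op_poly_mult[of p "[:0, 1:]" X]
  by (simp add: op_poly_linear mult.commute)

lemma op_poly_bops: "X \<in> bops \<Longrightarrow> op_poly p X \<in> bops"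
  by (induction p rule: pCons_induct)
    (simp_all add: bops_zero op_poly_pCons bops_add bops_scaleR bops_id bops_compose)

lemma op_poly_self_adjoint: "self_adjoint X \<Longrightarrow> self_adjoint (op_poly p X)"
  by (induction p rule: pCons_induct)
    (simp_all add: self_adjoint_zero op_poly_pCons self_adjoint_add self_adjoint_scaleR
      self_adjoint_id self_adjoint_compose_commute op_poly_commute)

section \<open>Polynomials not vanishing on the spectrum\<close>

lemma map_poly_of_real_add:
  "map_poly (of_real :: real \<Rightarrow> 'a::{real_algebra_1,comm_ring_1}) (p + q) =
    map_poly of_real p + map_poly of_real q"
  by (intro poly_eqI) (simp add: coeff_map_poly)

lemma map_poly_of_real_mult:
  "map_poly (of_real :: real \<Rightarrow> 'a::{real_algebra_1,comm_ring_1}) (p * q) =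
    map_poly of_real p * map_poly of_real q"
  by (intro poly_eqI) (simp add: coeff_map_poly coeff_mult)

lemma poly_map_poly_of_real:
  "poly (map_poly (of_real :: real \<Rightarrow> 'a::{real_algebra_1,comm_ring_1}) p) (of_real x) =
    of_real (poly p x)"
  by (induction p) (auto simp: map_poly_pCons)

lemma real_poly_quadratic_factor:
  fixes q :: "real poly"
  assumes deg: "degree q \<noteq> 0" and no_root: "\<And>x. poly q x \<noteq> 0"
  obtains a b q' where "b \<noteq> 0" "q = ([:- a, 1:] * [:- a, 1:] + [:b * b:]) * q'"
proof -
  have "\<not> constant (poly (map_poly complex_of_real q))"
    using deg by (simp add: constant_degree degree_map_poly)
  then obtain z where z: "poly (map_poly complex_of_real q) z = 0"
    using fundamental_theorem_of_algebra by blast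
  define a b where "a = Re z" and "b = Im z"
  have "b \<noteq> 0"
  proof
    assume "b = 0"
    hence "z = of_real a"
      by (simp add: a_def b_def complex_eq_iff)
    thus False
      using z no_root[of a] by (simp add: poly_map_poly_of_real)
  qed
  define D where "D = [:- a, 1:] * [:- a, 1:] + [:b * b:]"
  have D: "D \<noteq> 0" "degree D = 2"
    by (simp_all add: D_def degree_add_eq_left degree_mult_eq)
  have D_root: "poly (map_poly complex_of_real D) z = 0"
  proof -
    have "z - of_real a = \<i> * of_real b"
      by (simp add: a_def b_def complex_eq_iff)
    thus ?thesis
      by (simp add: D_def map_poly_of_real_add map_poly_of_real_mult map_poly_pCons algebra_simps)
  qed
  define r where "r = q mod D"
  have "degree r \<le> 1"
    using degree_mod_less[OF D(1), of q] D(2) by (cases "r = 0") (auto simp: r_def)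
  hence r: "r = [:coeff r 0, coeff r 1:]"
    by (intro poly_eqI) (auto simp: coeff_pCons coeff_eq_0 split: nat.splits)
  have "poly (map_poly complex_of_real r) z = 0"
    using z D_root div_mult_mod_eq[of q D]
    by (metis r_def map_poly_of_real_add map_poly_of_real_mult poly_add poly_mult mult_zero_right
        add_0 mult.commute)
  hence "of_real (coeff r 0) + z * of_real (coeff r 1) = 0"
    by (subst (asm) r) (simp add: map_poly_pCons)
  hence "coeff r 1 = 0" "coeff r 0 = 0"
    using \<open>b \<noteq> 0\<close> by (auto simp: complex_eq_iff a_def b_def)
  hence "q = D * (q div D)"
    using r div_mult_mod_eq[of q D] by (simp add: r_def mult.commute)
  thus ?thesis
    using that \<open>b \<noteq> 0\<close> by (simp add: D_def)
qed

lemma op_poly_quadratic_bounded_below: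
  assumes sa: "self_adjoint X" and b: "b \<noteq> 0"
  shows "bounded_below_op (op_poly ([:- a, 1:] * [:- a, 1:] + [:b * b:]) X)"
proof (rule bounded_below_opI_coercive)
  show "0 < b * b"
    using b not_real_square_gt_zero by blast
  fix x
  define Y where "Y = op_poly [:- a, 1:] X"
  have "op_poly ([:- a, 1:] * [:- a, 1:] + [:b * b:]) X = (Y o\<^sub>L Y) + (b * b) *\<^sub>R id_blinfun"
    unfolding Y_def op_poly_add op_poly_mult op_poly_const ..
  moreover have "Re (cinner x (Y (Y x))) = (norm (Y x))\<^sup>2"
    unfolding Y_def by (rule self_adjoint_Re_cinner_square[OF op_poly_self_adjoint[OF sa]])
  ultimately show "b * b * (norm x)\<^sup>2 \<le> Re (cinner x (op_poly ([:- a, 1:] * [:- a, 1:] + [:b * b:]) X x))"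
    by (simp add: blinfun_apply_arith cinner_add_right cinner_scaleR_right Re_cinner_self)
qed

lemma op_poly_linear_factor_bounded_below:
  assumes "self_adjoint X" "r \<notin> real_spectrum X"
  shows "bounded_below_op (op_poly [:- r, 1:] X)"
proof -
  have "bounded_below_op (X - r *\<^sub>R id_blinfun)"
    using assms by (intro self_adjoint_bij_bounded_below self_adjoint_diff self_adjoint_scaleR
        self_adjoint_id) (auto simp: real_spectrum_def)
  thus ?thesis
    by (simp add: op_poly_linear algebra_simps)
qed

lemma op_poly_bounded_below:
  assumes sa: "self_adjoint X"
  shows "q \<noteq> 0 \<Longrightarrow> (\<And>\<mu>. \<mu> \<in> real_spectrum X \<Longrightarrow> poly q \<mu> \<noteq> 0) \<Longrightarrow>
    bounded_below_op (op_poly q X)"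
proof (induction "degree q" arbitrary: q rule: less_induct)
  case less
  consider "degree q = 0" | r where "degree q \<noteq> 0" "poly q r = 0" | "degree q \<noteq> 0" "\<And>r. poly q r \<noteq> 0"
    by blast
  thus ?case
  proof cases
    case 1
    then obtain c where "q = [:c:]" "c \<noteq> 0"
      using less.prems(1) by (metis degree_eq_zeroE pCons_0_0)
    thus ?thesis
      by (simp add: op_poly_const bounded_below_op_scaleR_id)
  next
    case (2 r)
    then obtain q' where q': "q = [:- r, 1:] * q'"
      by (metis poly_eq_0_iff_dvd dvd_def)
    have "q' \<noteq> 0"
      using less.prems(1) q' by auto
    hence "degree q' < degree q"
      using degree_mult_eq[of "[:- r, 1:]" q'] by (simp add: q')
    have "r \<notin> real_spectrum X"
      using less.prems(2) 2 by blast
    moreover have "bounded_below_op (op_poly q' X)"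
      by (rule less.hyps[OF \<open>degree q' < degree q\<close> \<open>q' \<noteq> 0\<close>])
        (use less.prems(2) in \<open>metis q' poly_mult mult_zero_right\<close>)
    ultimately show ?thesis
      unfolding q' op_poly_mult
      by (intro bounded_below_op_compose op_poly_linear_factor_bounded_below sa)
  next
    case 3
    then obtain a b q' where b: "b \<noteq> 0" and q': "q = ([:- a, 1:] * [:- a, 1:] + [:b * b:]) * q'"
      using real_poly_quadratic_factor by metis
    have "q' \<noteq> 0"
      using less.prems(1) q' by auto
    hence "degree q' < degree q"
      using degree_mult_eq[of "[:- a, 1:] * [:- a, 1:] + [:b * b:]" q']
      by (simp add: q' degree_add_eq_left degree_mult_eq)
    have "bounded_below_op (op_poly q' X)"
      by (rule less.hyps[OF \<open>degree q' < degree q\<close> \<open>q' \<noteq> 0\<close>])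
        (use less.prems(2) in \<open>metis q' poly_mult mult_zero_right\<close>)
    with op_poly_quadratic_bounded_below[OF sa b] show ?thesis
      unfolding q' op_poly_mult by (rule bounded_below_op_compose)
  qed
qed

section \<open>The spectral lower bound for polynomials\<close>

lemma quadratic_nonneg_discriminant:
  fixes A B C :: real
  assumes nonneg: "\<And>s. 0 \<le> A + 2 * s * B + s\<^sup>2 * C" and C: "0 \<le> C"
  shows "B\<^sup>2 \<le> A * C"
proof (cases "C = 0")
  case True
  have "B = 0"
  proof (rule ccontr)
    assume "B \<noteq> 0"
    hence "A + 2 * (- (A + 1) / (2 * B)) * B = - 1"
      by (simp add: field_simps)
    thus False
      using nonneg[of "- (A + 1) / (2 * B)"] True by simp
  qed
  thus ?thesis
    using True by simp
next
  case False
  hence "C > 0"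
    using C by simp
  have "0 \<le> A + 2 * (- B / C) * B + (- B / C)\<^sup>2 * C"
    by (rule nonneg)
  also have "\<dots> = A - B\<^sup>2 / C"
    using \<open>C > 0\<close> by (simp add: field_simps power2_eq_square)
  finally show ?thesis
    using \<open>C > 0\<close> by (simp add: field_simps)
qed

text \<open>Cauchy-Schwarz for the semi-inner product \<open>(x, y) \<mapsto> Re (cinner x (P y))\<close> of a
  positive operator, applied to \<open>x\<close> and \<open>P x\<close>.\<close>

lemma power2_norm_apply_pos_le:
  fixes P :: "'a::complex_hilbert \<Rightarrow>\<^sub>L 'a"
  assumes sa: "self_adjoint P" and pos: "\<And>x. 0 \<le> Re (cinner x (P x))"
  shows "(norm (P x))\<^sup>2 \<le> norm P * Re (cinner x (P x))"
proof (cases "P x = 0")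
  case False
  define A B C where "A = Re (cinner x (P x))" and "B = (norm (P x))\<^sup>2"
    and "C = Re (cinner (P x) (P (P x)))"
  have "B\<^sup>2 \<le> A * C"
  proof (rule quadratic_nonneg_discriminant)
    fix s :: real
    have "0 \<le> Re (cinner (x + s *\<^sub>R P x) (P (x + s *\<^sub>R P x)))"
      by (rule pos)
    also have "\<dots> = A + 2 * s * B + s\<^sup>2 * C"
      using self_adjoint_Re_cinner_square[OF sa, of x]
      by (simp add: A_def B_def C_def blinfun_apply_arith cinner_add_left cinner_add_right
          cinner_scaleR_left cinner_scaleR_right Re_cinner_self power2_eq_square algebra_simps)
    finally show "0 \<le> A + 2 * s * B + s\<^sup>2 * C" .
  qed (simp add: C_def pos)
  also have "\<dots> \<le> A * (norm P * B)"
    using Re_cinner_apply_le[of "P x" P] by (intro mult_left_mono) (auto simp: A_def B_def C_def pos)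
  finally have "B * B \<le> (norm P * A) * B"
    by (simp add: power2_eq_square mult_ac)
  moreover have "B > 0"
    using False by (simp add: B_def)
  ultimately have "B \<le> norm P * A"
    by (simp add: mult_le_cancel_right_pos)
  thus ?thesis
    by (simp add: A_def B_def)
qed (simp add: pos)

lemma positive_op_not_bounded_below:
  fixes P :: "'a::complex_hilbert \<Rightarrow>\<^sub>L 'a"
  assumes sa: "self_adjoint P" and pos: "\<And>x. 0 \<le> Re (cinner x (P x))"
    and small: "\<And>d. 0 < d \<Longrightarrow> \<exists>u. norm u = 1 \<and> Re (cinner u (P u)) < d"
  shows "\<not> bounded_below_op P"
proof
  assume "bounded_below_op P"
  then obtain k where k: "k > 0" "\<And>x. k * norm x \<le> norm (P x)"
    unfolding bounded_below_op_def by blast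
  define d where "d = k\<^sup>2 / (norm P + 1)"
  have "d > 0"
    using k by (simp add: d_def add_nonneg_pos)
  then obtain u where u: "norm u = 1" "Re (cinner u (P u)) < d"
    using small by blast
  have "k\<^sup>2 \<le> (norm (P u))\<^sup>2"
    using k(2)[of u] u(1) k(1) by (simp add: power_mono)
  also have "\<dots> \<le> norm P * Re (cinner u (P u))"
    by (rule power2_norm_apply_pos_le[OF sa pos])
  also have "\<dots> \<le> norm P * d"
    using u by (intro mult_left_mono) auto
  also have "\<dots> < (norm P + 1) * d"
    using \<open>d > 0\<close> by simp
  also have "\<dots> = k\<^sup>2"
    using norm_ge_zero[of P] by (simp add: d_def add_nonneg_eq_0_iff)
  finally show False
    by simp
qed

lemma inf_numerical_range_not_bounded_below:
  fixes T :: "'a::complex_hilbert \<Rightarrow>\<^sub>L 'a" and x0 :: 'a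
  assumes sa: "self_adjoint T" and x0: "x0 \<noteq> 0"
  obtains a where "\<And>x. a * (norm x)\<^sup>2 \<le> Re (cinner x (T x))"
    and "\<not> bounded_below_op (T - a *\<^sub>R id_blinfun)"
proof -
  define U where "U = (\<lambda>u. Re (cinner u (T u))) ` {u. norm u = 1}"
  define a where "a = Inf U"
  have "U \<noteq> {}"
  proof -
    have "norm ((1 / norm x0) *\<^sub>R x0) = 1"
      using x0 by simp
    thus ?thesis
      unfolding U_def by blast
  qed
  have "bdd_below U"
  proof (rule bdd_belowI)
    fix y
    assume "y \<in> U"
    then obtain u where "norm u = 1" "y = Re (cinner u (T u))"
      by (auto simp: U_def)
    thus "- norm T \<le> y"
      using abs_Re_cinner_apply_le[of u T] by (simp add: abs_le_iff)
  qed
  have lower: "a * (norm x)\<^sup>2 \<le> Re (cinner x (T x))" for x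
  proof (cases "x = 0")
    case False
    have "a \<le> Re (cinner ((1 / norm x) *\<^sub>R x) (T ((1 / norm x) *\<^sub>R x)))"
      unfolding a_def using False by (intro cInf_lower[OF _ \<open>bdd_below U\<close>]) (simp add: U_def)
    thus ?thesis
      using False by (simp add: Re_cinner_apply_scaleR power_divide field_simps)
  qed simp
  have form: "Re (cinner x ((T - a *\<^sub>R id_blinfun) x)) = Re (cinner x (T x)) - a * (norm x)\<^sup>2" for x
    by (simp add: blinfun_apply_arith cinner_diff_right cinner_scaleR_right Re_cinner_self)
  have "\<not> bounded_below_op (T - a *\<^sub>R id_blinfun)"
  proof (rule positive_op_not_bounded_below)
    show "self_adjoint (T - a *\<^sub>R id_blinfun)"
      by (intro self_adjoint_diff self_adjoint_scaleR self_adjoint_id sa)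
    show "0 \<le> Re (cinner x ((T - a *\<^sub>R id_blinfun) x))" for x
      using lower[of x] form[of x] by simp
    fix d :: real
    assume "0 < d"
    then obtain u where "norm u = 1" "Re (cinner u (T u)) < a + d"
      using cInf_lessD[OF \<open>U \<noteq> {}\<close>, of "a + d"] by (auto simp: a_def U_def)
    thus "\<exists>u. norm u = 1 \<and> Re (cinner u ((T - a *\<^sub>R id_blinfun) u)) < d"
      using form by auto
  qed
  thus ?thesis
    using that lower by blast
qed

lemma real_spectrum_nonempty:
  fixes X :: "'a::complex_hilbert \<Rightarrow>\<^sub>L 'a" and x0 :: 'a
  assumes sa: "self_adjoint X" and "x0 \<noteq> 0"
  shows "real_spectrum X \<noteq> {}"
proof -
  obtain a where "\<not> bounded_below_op (X - a *\<^sub>R id_blinfun)"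
    using inf_numerical_range_not_bounded_below[OF assms] by blast
  hence "\<not> bij (blinfun_apply (X - a *\<^sub>R id_blinfun))"
    by (metis self_adjoint_bij_bounded_below self_adjoint_diff self_adjoint_scaleR self_adjoint_id sa)
  thus ?thesis
    by (auto simp: real_spectrum_def)
qed

lemma op_poly_lower_bound:
  fixes X :: "'a::complex_hilbert \<Rightarrow>\<^sub>L 'a"
  assumes sa: "self_adjoint X" and ge: "\<And>\<mu>. \<mu> \<in> real_spectrum X \<Longrightarrow> c \<le> poly p \<mu>"
  shows "c * (norm x)\<^sup>2 \<le> Re (cinner x (op_poly p X x))"
proof (rule ccontr)
  assume less: "\<not> ?thesis"
  hence "x \<noteq> 0"
    by auto
  obtain a where a: "\<And>x. a * (norm x)\<^sup>2 \<le> Re (cinner x (op_poly p X x))"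
    and not_bb: "\<not> bounded_below_op (op_poly p X - a *\<^sub>R id_blinfun)"
    using inf_numerical_range_not_bounded_below[OF op_poly_self_adjoint[OF sa] \<open>x \<noteq> 0\<close>] by blast
  have "a * (norm x)\<^sup>2 < c * (norm x)\<^sup>2"
    using a[of x] less by simp
  hence "a < c"
    using \<open>x \<noteq> 0\<close> by (simp add: mult_less_cancel_right)
  show False
  proof (cases "p - [:a:] = 0")
    case True
    obtain \<mu> where "\<mu> \<in> real_spectrum X"
      using real_spectrum_nonempty[OF sa \<open>x \<noteq> 0\<close>] by blast
    thus False
      using ge[of \<mu>] True \<open>a < c\<close> by simp
  next
    case False
    have "bounded_below_op (op_poly (p - [:a:]) X)"
      using ge \<open>a < c\<close> by (intro op_poly_bounded_below[OF sa False]) force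
    thus False
      using not_bb by (simp add: op_poly_diff op_poly_const)
  qed
qed

lemma norm_op_poly_le:
  fixes X :: "'a::complex_hilbert \<Rightarrow>\<^sub>L 'a"
  assumes sa: "self_adjoint X" and e: "0 \<le> e"
    and le: "\<And>\<mu>. \<mu> \<in> real_spectrum X \<Longrightarrow> \<bar>poly p \<mu>\<bar> \<le> e"
  shows "norm (op_poly p X) \<le> e"
proof (rule norm_self_adjoint_le[OF op_poly_self_adjoint[OF sa] e])
  fix x
  have "- e * (norm x)\<^sup>2 \<le> Re (cinner x (op_poly p X x))"
    by (rule op_poly_lower_bound[OF sa]) (use le in \<open>force simp: abs_le_iff\<close>)
  moreover have "- e * (norm x)\<^sup>2 \<le> - Re (cinner x (op_poly p X x))"
    using op_poly_lower_bound[OF sa, of "- e" "- p" x] le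
    by (force simp: abs_le_iff op_poly_minus blinfun_apply_arith cinner_minus_right)
  ultimately show "\<bar>Re (cinner x (op_poly p X x))\<bar> \<le> e * (norm x)\<^sup>2"
    by (simp add: abs_le_iff)
qed

section \<open>The continuous functional calculus\<close>

abbreviation poly_approx :: "real set \<Rightarrow> (nat \<Rightarrow> real poly) \<Rightarrow> (real \<Rightarrow> real) \<Rightarrow> bool" where
  "poly_approx S p h \<equiv> uniform_limit S (\<lambda>n x. poly (p n) x) h sequentially"

lemma poly_approx_exists:
  assumes "compact K" "continuous_on K h" "S \<subseteq> K"
  shows "\<exists>p. poly_approx S p h"
proof -
  have "\<exists>q. \<forall>x\<in>K. \<bar>h x - poly q x\<bar> < 1 / Suc n" for n
  proof -
    obtain f where f: "real_polynomial_function f" "\<And>x. x \<in> K \<Longrightarrow> \<bar>h x - f x\<bar> < 1 / Suc n"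
      using Stone_Weierstrass_real_polynomial_function[OF assms(1,2), of "1 / Suc n"] by auto
    obtain a k where "f = (\<lambda>x. \<Sum>i\<le>k. a i * x ^ i)"
      using f(1) real_polynomial_function_iff_sum by blast
    hence "poly (\<Sum>i\<le>k. monom (a i) i) x = f x" for x
      by (simp add: poly_sum poly_monom)
    thus ?thesis
      using f(2) by metis
  qed
  then obtain p where p: "\<And>n x. x \<in> K \<Longrightarrow> \<bar>h x - poly (p n) x\<bar> < 1 / Suc n"
    by metis
  have "poly_approx K p h"
  proof (rule uniform_limitI)
    fix e :: real
    assume "0 < e"
    have "(\<lambda>n. 1 / real (Suc n)) \<longlonglongrightarrow> 0"
      using LIMSEQ_Suc[OF lim_1_over_n] by simp
    hence "\<forall>\<^sub>F n in sequentially. 1 / real (Suc n) < e"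
      using \<open>0 < e\<close> by (rule order_tendstoD)
    thus "\<forall>\<^sub>F n in sequentially. \<forall>x\<in>K. dist (poly (p n) x) (h x) < e"
    proof eventually_elim
      case (elim n)
      show ?case
      proof
        fix x
        assume "x \<in> K"
        have "dist (poly (p n) x) (h x) = \<bar>h x - poly (p n) x\<bar>"
          by (simp add: dist_real_def abs_minus_commute)
        also have "\<dots> < 1 / real (Suc n)"
          using p \<open>x \<in> K\<close> by simp
        finally show "dist (poly (p n) x) (h x) < e"
          using elim by simp
      qed
    qed
  qed
  thus ?thesis
    using uniform_limit_on_subset assms(3) by blast
qed

lemma op_poly_approx_close:
  fixes X :: "'a::complex_hilbert \<Rightarrow>\<^sub>L 'a"
  assumes sa: "self_adjoint X" and p: "poly_approx (real_spectrum X) p h"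
    and q: "poly_approx (real_spectrum X) q h" and e: "e > 0"
  shows "\<exists>N. \<forall>n\<ge>N. \<forall>k\<ge>N. norm (op_poly (p n) X - op_poly (q k) X) \<le> e"
proof -
  have "\<forall>\<^sub>F n in sequentially. \<forall>\<mu>\<in>real_spectrum X. \<bar>poly (p n) \<mu> - h \<mu>\<bar> < e / 2"
    "\<forall>\<^sub>F n in sequentially. \<forall>\<mu>\<in>real_spectrum X. \<bar>poly (q n) \<mu> - h \<mu>\<bar> < e / 2"
    using uniform_limitD[OF p, of "e / 2"] uniform_limitD[OF q, of "e / 2"] e
    by (simp_all add: dist_real_def)
  then obtain N where N: "\<And>n \<mu>. n \<ge> N \<Longrightarrow> \<mu> \<in> real_spectrum X \<Longrightarrow>
      \<bar>poly (p n) \<mu> - h \<mu>\<bar> < e / 2 \<and> \<bar>poly (q n) \<mu> - h \<mu>\<bar> < e / 2"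
    unfolding eventually_sequentially by (metis nat_le_linear le_trans)
  have "norm (op_poly (p n - q k) X) \<le> e" if "n \<ge> N" "k \<ge> N" for n k
  proof (rule norm_op_poly_le[OF sa])
    fix \<mu>
    assume "\<mu> \<in> real_spectrum X"
    hence "\<bar>poly (p n) \<mu> - h \<mu>\<bar> < e / 2" "\<bar>poly (q k) \<mu> - h \<mu>\<bar> < e / 2"
      using N that by blast+
    thus "\<bar>poly (p n - q k) \<mu>\<bar> \<le> e"
      unfolding poly_diff by arith
  qed (use e in simp)
  thus ?thesis
    by (auto simp: op_poly_diff)
qed

lemma opfun_tendsto:
  fixes X :: "'a::complex_hilbert \<Rightarrow>\<^sub>L 'a"
  assumes sa: "self_adjoint X" and p: "poly_approx (real_spectrum X) p h"
  shows "(\<lambda>n. op_poly (p n) X) \<longlonglongrightarrow> opfun h X"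
proof -
  have "Cauchy (\<lambda>n. op_poly (p n) X)"
  proof (rule CauchyI)
    fix e :: real
    assume "e > 0"
    then obtain N where "\<forall>n\<ge>N. \<forall>k\<ge>N. norm (op_poly (p n) X - op_poly (p k) X) \<le> e / 2"
      using op_poly_approx_close[OF sa p p, of "e / 2"] by auto
    thus "\<exists>N. \<forall>n\<ge>N. \<forall>k\<ge>N. norm (op_poly (p n) X - op_poly (p k) X) < e"
      using \<open>e > 0\<close> by (intro exI[of _ N]) force
  qed
  then obtain B where B: "(\<lambda>n. op_poly (p n) X) \<longlonglongrightarrow> B"
    using Cauchy_convergent_iff convergent_def by blast
  have all: "(\<lambda>n. op_poly (q n) X) \<longlonglongrightarrow> B" if q: "poly_approx (real_spectrum X) q h" for q
  proof -
    have "(\<lambda>n. op_poly (q n) X - op_poly (p n) X) \<longlonglongrightarrow> 0"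
    proof (rule LIMSEQ_I)
      fix e :: real
      assume "e > 0"
      then obtain N where "\<forall>n\<ge>N. \<forall>k\<ge>N. norm (op_poly (q n) X - op_poly (p k) X) \<le> e / 2"
        using op_poly_approx_close[OF sa q p, of "e / 2"] by auto
      thus "\<exists>N. \<forall>n\<ge>N. norm (op_poly (q n) X - op_poly (p n) X - 0) < e"
        using \<open>e > 0\<close> by (intro exI[of _ N]) force
    qed
    from tendsto_add[OF this B] show ?thesis
      by simp
  qed
  have "opfun h X = B"
    unfolding opfun_def
  proof (rule the_equality)
    fix B'
    assume "\<forall>q. poly_approx (real_spectrum X) q h \<longrightarrow> (\<lambda>n. op_poly (q n) X) \<longlonglongrightarrow> B'"
    thus "B' = B"
      using p B LIMSEQ_unique by blast
  qed (use all in blast)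
  thus ?thesis
    using B by simp
qed

lemma opfun_poly:
  fixes X :: "'a::complex_hilbert \<Rightarrow>\<^sub>L 'a"
  assumes sa: "self_adjoint X"
  shows "opfun (poly q) X = op_poly q X"
proof -
  have "poly_approx (real_spectrum X) (\<lambda>n. q) (poly q)"
    by (rule uniform_limitI) simp
  from opfun_tendsto[OF sa this] show ?thesis
    by (simp add: LIMSEQ_const_iff)
qed

lemma opfun_scaleR:
  fixes X :: "'a::complex_hilbert \<Rightarrow>\<^sub>L 'a"
  assumes sa: "self_adjoint X" and p: "poly_approx (real_spectrum X) p h"
  shows "opfun (\<lambda>x. c * h x) X = c *\<^sub>R opfun h X"
proof -
  have "poly_approx (real_spectrum X) (\<lambda>n. smult c (p n)) (\<lambda>x. c * h x)"
  proof -
    have "uniform_limit (real_spectrum X) (\<lambda>n x. c * poly (p n) x) (\<lambda>x. c * h x) sequentially"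
      by (intro uniform_limit_intros p)
    thus ?thesis
      by simp
  qed
  hence "(\<lambda>n. op_poly (smult c (p n)) X) \<longlonglongrightarrow> opfun (\<lambda>x. c * h x) X"
    by (rule opfun_tendsto[OF sa])
  moreover have "(\<lambda>n. op_poly (smult c (p n)) X) \<longlonglongrightarrow> c *\<^sub>R opfun h X"
    unfolding op_poly_smult by (intro tendsto_scaleR tendsto_const opfun_tendsto[OF sa p])
  ultimately show ?thesis
    by (rule LIMSEQ_unique)
qed

lemma opfun_diff:
  fixes X :: "'a::complex_hilbert \<Rightarrow>\<^sub>L 'a"
  assumes sa: "self_adjoint X" and p: "poly_approx (real_spectrum X) p h"
    and q: "poly_approx (real_spectrum X) q k"
  shows "opfun (\<lambda>x. k x - h x) X = opfun k X - opfun h X"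
proof -
  have "poly_approx (real_spectrum X) (\<lambda>n. q n - p n) (\<lambda>x. k x - h x)"
    using uniform_limit_minus[OF q p] by simp
  hence "(\<lambda>n. op_poly (q n - p n) X) \<longlonglongrightarrow> opfun (\<lambda>x. k x - h x) X"
    by (rule opfun_tendsto[OF sa])
  moreover have "(\<lambda>n. op_poly (q n - p n) X) \<longlonglongrightarrow> opfun k X - opfun h X"
    unfolding op_poly_diff by (intro tendsto_diff opfun_tendsto[OF sa p] opfun_tendsto[OF sa q])
  ultimately show ?thesis
    by (rule LIMSEQ_unique)
qed

lemma opfun_bops:
  fixes X :: "'a::complex_hilbert \<Rightarrow>\<^sub>L 'a"
  assumes sa: "self_adjoint X" and X: "X \<in> bops" and p: "poly_approx (real_spectrum X) p h"
  shows "opfun h X \<in> bops"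
  by (rule bops_closed[OF opfun_tendsto[OF sa p] op_poly_bops[OF X]])

lemma nonneg_if_neg_multiples_le:
  fixes c y :: real
  assumes "\<And>e. 0 < e \<Longrightarrow> - e * c \<le> y"
  shows "0 \<le> y"
proof -
  have "(\<lambda>n. - (1 / real (Suc n)) * c) \<longlonglongrightarrow> 0"
    using tendsto_mult[OF tendsto_minus[OF LIMSEQ_Suc[OF lim_1_over_n]] tendsto_const[of c]]
    by simp
  moreover have "\<forall>\<^sub>F n in sequentially. - (1 / real (Suc n)) * c \<le> y"
    by (intro always_eventually allI assms) simp
  ultimately show ?thesis
    by (rule tendsto_upperbound) simp
qed

lemma opfun_nonneg:
  fixes X :: "'a::complex_hilbert \<Rightarrow>\<^sub>L 'a"
  assumes sa: "self_adjoint X" and p: "poly_approx (real_spectrum X) p h"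
    and nonneg: "\<And>\<mu>. \<mu> \<in> real_spectrum X \<Longrightarrow> 0 \<le> h \<mu>"
  shows "op_pos (opfun h X)"
  unfolding op_pos_def
proof (intro allI conjI)
  fix x
  have lim: "(\<lambda>n. op_poly (p n) X x) \<longlonglongrightarrow> opfun h X x"
    by (intro blinfun.tendsto opfun_tendsto[OF sa p] tendsto_const)
  have "(\<lambda>n. Im (cinner x (op_poly (p n) X x))) \<longlonglongrightarrow> Im (cinner x (opfun h X x))"
    by (intro bounded_bilinear.tendsto[OF bounded_bilinear_Im_cinner] tendsto_const lim)
  thus "Im (cinner x (opfun h X x)) = 0"
    by (simp add: self_adjoint_Im_cinner[OF op_poly_self_adjoint[OF sa]] LIMSEQ_const_iff)
  have Re_lim: "(\<lambda>n. Re (cinner x (op_poly (p n) X x))) \<longlonglongrightarrow> Re (cinner x (opfun h X x))"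
    by (intro bounded_bilinear.tendsto[OF bounded_bilinear_Re_cinner] tendsto_const lim)
  have lower: "- e * (norm x)\<^sup>2 \<le> Re (cinner x (opfun h X x))" if "e > 0" for e
  proof (rule tendsto_lowerbound[OF Re_lim])
    show "\<forall>\<^sub>F n in sequentially. - e * (norm x)\<^sup>2 \<le> Re (cinner x (op_poly (p n) X x))"
      using uniform_limitD[OF p \<open>e > 0\<close>]
    proof eventually_elim
      case (elim n)
      show ?case
      proof (rule op_poly_lower_bound[OF sa])
        fix \<mu>
        assume "\<mu> \<in> real_spectrum X"
        with elim nonneg[of \<mu>] show "- e \<le> poly (p n) \<mu>"
          by (auto simp: dist_real_def abs_less_iff)
      qed
    qed
  qed simp
  show "0 \<le> Re (cinner x (opfun h X x))"
    using lower by (rule nonneg_if_neg_multiples_le)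
qed

lemma opfun_mono:
  fixes X :: "'a::complex_hilbert \<Rightarrow>\<^sub>L 'a"
  assumes sa: "self_adjoint X" and spec: "real_spectrum X \<subseteq> {a..b}"
    and h: "continuous_on {a..b} h" and k: "continuous_on {a..b} k"
    and le: "\<And>\<mu>. \<mu> \<in> real_spectrum X \<Longrightarrow> h \<mu> \<le> k \<mu>"
  shows "op_le (opfun h X) (opfun k X)"
proof -
  obtain p q where p: "poly_approx (real_spectrum X) p h" and q: "poly_approx (real_spectrum X) q k"
    using poly_approx_exists[OF compact_Icc h spec] poly_approx_exists[OF compact_Icc k spec]
    by blast
  have "poly_approx (real_spectrum X) (\<lambda>n. q n - p n) (\<lambda>x. k x - h x)"
    using uniform_limit_minus[OF q p] by simp
  hence "op_pos (opfun (\<lambda>x. k x - h x) X)"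
    by (rule opfun_nonneg[OF sa]) (simp add: le)
  thus ?thesis
    by (simp add: op_le_def opfun_diff[OF sa p q])
qed

lemma opfun_scaleR_continuous:
  fixes X :: "'a::complex_hilbert \<Rightarrow>\<^sub>L 'a"
  assumes sa: "self_adjoint X" and spec: "real_spectrum X \<subseteq> {a..b}"
    and h: "continuous_on {a..b} h"
  shows "opfun (\<lambda>x. c * h x) X = c *\<^sub>R opfun h X"
  using poly_approx_exists[OF compact_Icc h spec] opfun_scaleR[OF sa] by blast

lemma opfun_bops_continuous:
  fixes X :: "'a::complex_hilbert \<Rightarrow>\<^sub>L 'a"
  assumes sa: "self_adjoint X" and X: "X \<in> bops" and spec: "real_spectrum X \<subseteq> {a..b}"
    and h: "continuous_on {a..b} h"
  shows "opfun h X \<in> bops"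
  using poly_approx_exists[OF compact_Icc h spec] opfun_bops[OF sa X] by blast

section \<open>The scalar inequalities\<close>

lemma geometric_interpolation_eq:
  fixes m M t x :: real
  assumes "0 < m" "m < M"
  defines "l \<equiv> (x - m) / (M - m)"
  shows "(M powr (x - m) * m powr (M - x)) powr (t / (M - m)) = (M powr l * m powr (1 - l)) powr t"
proof -
  have "1 - l = (M - x) / (M - m)"
    using assms by (simp add: l_def field_simps)
  thus ?thesis
    using assms by (simp add: powr_mult powr_powr l_def field_simps)
qed

lemma powr_le_geometric_interpolation:
  fixes m M t x :: real
  assumes "0 < m" "m < M" "t \<le> 0" "m \<le> x" "x \<le> M"
  shows "x powr t \<le> (M powr (x - m) * m powr (M - x)) powr (t / (M - m))"
proof -
  define l where "l = (x - m) / (M - m)"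
  have l: "0 \<le> l" "l \<le> 1"
    using assms by (simp_all add: l_def field_simps)
  have "M powr l * m powr (1 - l) \<le> l * M + (1 - l) * m"
    using l assms by (intro Youngs_inequality_0) auto
  also have "\<dots> = m + l * (M - m)"
    by (simp add: algebra_simps)
  also have "\<dots> = x"
    using assms by (simp add: l_def)
  finally have "x powr t \<le> (M powr l * m powr (1 - l)) powr t"
    using assms by (intro powr_mono2') auto
  thus ?thesis
    using geometric_interpolation_eq[OF assms(1,2)] by (simp add: l_def)
qed

lemma geometric_interpolation_le_chord:
  fixes m M t x :: real
  assumes "0 < m" "m < M" "m \<le> x" "x \<le> M"
  shows "(M powr (x - m) * m powr (M - x)) powr (t / (M - m)) \<le>
    (M powr t - m powr t) / (M - m) * x + (M * m powr t - m * M powr t) / (M - m)"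
proof -
  define l where "l = (x - m) / (M - m)"
  have l: "0 \<le> l" "l \<le> 1"
    using assms by (simp_all add: l_def field_simps)
  have "(M powr (x - m) * m powr (M - x)) powr (t / (M - m)) = (M powr t) powr l * (m powr t) powr (1 - l)"
    using geometric_interpolation_eq[OF assms(1,2)] assms
    by (simp add: l_def powr_mult powr_powr mult.commute)
  also have "\<dots> \<le> l * M powr t + (1 - l) * m powr t"
    using l assms by (intro Youngs_inequality_0) auto
  also have "\<dots> = (M powr t - m powr t) / (M - m) * x + (M * m powr t - m * M powr t) / (M - m)"
    using assms by (simp add: l_def field_simps)
  finally show ?thesis .
qed

lemma tangent_line_le_powr:
  fixes u t :: real
  assumes "0 < u" "t \<le> 0"
  shows "1 + t * (u - 1) \<le> u powr t"
proof -
  have "t * (u - 1) \<le> t * ln u"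
    using ln_le_minus_one[OF assms(1)] assms(2) by (simp add: mult_left_mono_neg)
  also have "1 + t * ln u \<le> exp (t * ln u)"
    by (rule exp_ge_add_one_self)
  finally show ?thesis
    using assms by (simp add: powr_def)
qed

lemma affine_le_scaled_powr:
  fixes \<alpha> \<beta> t x :: real
  assumes "\<alpha> < 0" "0 < \<beta>" "t < 0" "0 < x"
  defines "x0 \<equiv> t * \<beta> / (\<alpha> * (1 - t))"
  shows "\<alpha> * x + \<beta> \<le> \<beta> / (1 - t) * (x / x0) powr t"
proof -
  have "x0 > 0"
    using assms by (simp add: x0_def divide_neg_neg mult_neg_pos)
  have "\<alpha> * x + \<beta> = \<beta> / (1 - t) * (1 + t * (x / x0 - 1))"
    using assms by (simp add: x0_def field_simps)
  also have "\<dots> \<le> \<beta> / (1 - t) * (x / x0) powr t"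
    using assms(2-4) \<open>x0 > 0\<close> by (intro mult_left_mono tangent_line_le_powr) auto
  finally show ?thesis .
qed

text \<open>\<open>Kconst m M t\<close> is the constant for which \<open>Kconst m M t * x powr t\<close> touches the chord
  \<open>\<alpha> * x + \<beta>\<close> of \<open>x powr t\<close> over \<open>[m, M]\<close>, at the point \<open>x0\<close>.\<close>

lemma Kconst_tangent_form:
  fixes m M t :: real
  assumes "0 < m" "m < M" "t < 0"
  obtains \<alpha> \<beta> x0 where "\<alpha> = (M powr t - m powr t) / (M - m)"
    and "\<beta> = (M * m powr t - m * M powr t) / (M - m)" and "x0 = t * \<beta> / (\<alpha> * (1 - t))"
    and "\<alpha> < 0" "0 < \<beta>" "0 < x0" and "Kconst m M t = \<beta> / (1 - t) * x0 powr (- t)"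
proof -
  define \<alpha> \<beta> where "\<alpha> = (M powr t - m powr t) / (M - m)"
    and "\<beta> = (M * m powr t - m * M powr t) / (M - m)"
  define x0 where "x0 = t * \<beta> / (\<alpha> * (1 - t))"
  have "M powr t < m powr t"
    using assms by (simp add: powr_less_mono2_neg)
  moreover have "m * M powr t < M * m powr t"
    using mult_strict_mono[OF \<open>m < M\<close> calculation] assms by simp
  ultimately have "\<alpha> < 0" "0 < \<beta>"
    using assms by (simp_all add: \<alpha>_def \<beta>_def divide_neg_pos)
  hence "0 < x0"
    using assms by (simp add: x0_def divide_neg_neg mult_neg_pos)
  have "(m * M powr t - M * m powr t) / ((t - 1) * (M - m)) = \<beta> / (1 - t)"
  proof -
    have "(t - 1) * (M - m) = - ((1 - t) * (M - m))" "m * M powr t - M * m powr t = - (M * m powr t - m * M powr t)"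
      by (simp_all add: algebra_simps)
    thus ?thesis
      by (simp only: minus_divide_divide) (simp add: \<beta>_def mult.commute)
  qed
  moreover have "(t - 1) / t * ((M powr t - m powr t) / (m * M powr t - M * m powr t)) = 1 / x0"
  proof -
    have ab: "M powr t - m powr t = \<alpha> * (M - m)" "m * M powr t - M * m powr t = - (\<beta> * (M - m))"
      using assms by (simp_all add: \<alpha>_def \<beta>_def)
    show ?thesis
      unfolding ab using assms \<open>\<alpha> < 0\<close> \<open>0 < \<beta>\<close> by (simp add: x0_def field_simps)
  qed
  ultimately have "Kconst m M t = \<beta> / (1 - t) * x0 powr (- t)"
    using \<open>0 < x0\<close> by (simp add: Kconst_def powr_divide powr_minus_divide)
  with \<alpha>_def \<beta>_def x0_def \<open>\<alpha> < 0\<close> \<open>0 < \<beta>\<close> \<open>0 < x0\<close> show ?thesis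
    by (rule that)
qed

lemma Kconst_pos:
  assumes "0 < m" "m < M" "t < 0"
  shows "0 < Kconst m M t"
proof -
  obtain \<alpha> \<beta> x0 where "0 < \<beta>" "0 < x0" "Kconst m M t = \<beta> / (1 - t) * x0 powr (- t)"
    using Kconst_tangent_form[OF assms] by metis
  thus ?thesis
    using assms(3) by simp
qed

lemma chord_le_Kconst_powr:
  fixes m M t x :: real
  assumes "0 < m" "m < M" "t < 0" "0 < x"
  shows "(M powr t - m powr t) / (M - m) * x + (M * m powr t - m * M powr t) / (M - m) \<le>
    Kconst m M t * x powr t"
proof -
  obtain \<alpha> \<beta> x0 where \<alpha>: "\<alpha> = (M powr t - m powr t) / (M - m)"
    and \<beta>: "\<beta> = (M * m powr t - m * M powr t) / (M - m)" and x0: "x0 = t * \<beta> / (\<alpha> * (1 - t))"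
    and signs: "\<alpha> < 0" "0 < \<beta>" "0 < x0" and K: "Kconst m M t = \<beta> / (1 - t) * x0 powr (- t)"
    by (rule Kconst_tangent_form[OF assms(1-3)])
  have "\<alpha> * x + \<beta> \<le> \<beta> / (1 - t) * (x / x0) powr t"
    unfolding x0 by (rule affine_le_scaled_powr[OF signs(1,2) assms(3,4)])
  also have "\<dots> = Kconst m M t * x powr t"
    unfolding K using signs(3) assms(4) by (simp add: powr_divide powr_minus_divide)
  finally show ?thesis
    by (simp add: \<alpha> \<beta>)
qed

lemma opfun_powr_chain:
  fixes X :: "'a::complex_hilbert \<Rightarrow>\<^sub>L 'a" and m M t :: real
  assumes X: "X \<in> bops" "self_adjoint X" "real_spectrum X \<subseteq> {m..M}"
    and m: "0 < m" and mM: "m < M" and t: "t < 0"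
  defines "f \<equiv> \<lambda>x::real. x powr t"
    and "g \<equiv> \<lambda>x::real. (M powr (x - m) * m powr (M - x)) powr (t / (M - m))"
    and "\<alpha> \<equiv> (M powr t - m powr t) / (M - m)"
    and "\<beta> \<equiv> (M * m powr t - m * M powr t) / (M - m)"
  shows "op_le (opfun f X) (opfun g X)"
    and "op_le (opfun g X) (\<beta> *\<^sub>R id_blinfun + \<alpha> *\<^sub>R X)"
    and "op_le (\<beta> *\<^sub>R id_blinfun + \<alpha> *\<^sub>R X) (Kconst m M t *\<^sub>R opfun f X)"
    and "opfun f X \<in> bops" "opfun g X \<in> bops"
proof -
  have f: "continuous_on {m..M} f"
    unfolding f_def using m by (intro continuous_intros) auto
  have g: "continuous_on {m..M} g"
    unfolding g_def using m mM by (intro continuous_intros) auto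
  have chord: "continuous_on {m..M} (poly [:\<beta>, \<alpha>:])"
    by (intro continuous_intros)
  have affine: "\<beta> *\<^sub>R id_blinfun + \<alpha> *\<^sub>R X = opfun (poly [:\<beta>, \<alpha>:]) X"
    by (simp add: opfun_poly[OF X(2)] op_poly_linear)
  have spec: "m \<le> \<mu>" "\<mu> \<le> M" if "\<mu> \<in> real_spectrum X" for \<mu>
    using X(3) that by auto
  show "op_le (opfun f X) (opfun g X)"
    by (rule opfun_mono[OF X(2,3) f g])
      (use spec m mM t in \<open>simp add: f_def g_def powr_le_geometric_interpolation\<close>)
  show "op_le (opfun g X) (\<beta> *\<^sub>R id_blinfun + \<alpha> *\<^sub>R X)"
    unfolding affine
  proof (rule opfun_mono[OF X(2,3) g chord])
    fix \<mu>
    assume "\<mu> \<in> real_spectrum X"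
    hence "g \<mu> \<le> \<alpha> * \<mu> + \<beta>"
      unfolding g_def \<alpha>_def \<beta>_def by (intro geometric_interpolation_le_chord m mM spec)
    thus "g \<mu> \<le> poly [:\<beta>, \<alpha>:] \<mu>"
      by (simp add: algebra_simps)
  qed
  show "op_le (\<beta> *\<^sub>R id_blinfun + \<alpha> *\<^sub>R X) (Kconst m M t *\<^sub>R opfun f X)"
    unfolding affine opfun_scaleR_continuous[OF X(2,3) f, symmetric]
  proof (rule opfun_mono[OF X(2,3) chord continuous_on_mult_left[OF f]])
    fix \<mu>
    assume "\<mu> \<in> real_spectrum X"
    hence "0 < \<mu>"
      using spec(1) m by fastforce
    hence "\<alpha> * \<mu> + \<beta> \<le> Kconst m M t * f \<mu>"
      unfolding f_def \<alpha>_def \<beta>_def by (rule chord_le_Kconst_powr[OF m mM t])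
    thus "poly [:\<beta>, \<alpha>:] \<mu> \<le> Kconst m M t * f \<mu>"
      by (simp add: algebra_simps)
  qed
  show "opfun f X \<in> bops" "opfun g X \<in> bops"
    by (intro opfun_bops_continuous[OF X(2,1,3)] f g)+
qed

lemma op_scaleC_of_real: "op_scaleC (complex_of_real r) X = r *\<^sub>R X"
proof -
  have "(\<lambda>x. scaleC (complex_of_real r) (X x)) = blinfun_apply (r *\<^sub>R X)"
    by (rule ext) (simp add: scaleC_of_real blinfun_apply_arith)
  thus ?thesis
    unfolding op_scaleC_def by (simp add: blinfun_apply_inverse)
qed

locale positive_unital_map =
  fixes \<phi> :: "('a::complex_hilbert \<Rightarrow>\<^sub>L 'a) \<Rightarrow> ('b::complex_hilbert \<Rightarrow>\<^sub>L 'b)"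
  assumes positive_unital_linear: "positive_unital_linear_map \<phi>"
begin

lemma maps_bops: "X \<in> bops \<Longrightarrow> \<phi> X \<in> bops"
  using positive_unital_linear by (simp add: positive_unital_linear_map_def)

lemma add: "X \<in> bops \<Longrightarrow> Y \<in> bops \<Longrightarrow> \<phi> (X + Y) = \<phi> X + \<phi> Y"
  using positive_unital_linear by (simp add: positive_unital_linear_map_def)

lemma scaleR: "X \<in> bops \<Longrightarrow> \<phi> (r *\<^sub>R X) = r *\<^sub>R \<phi> X"
  using positive_unital_linear unfolding positive_unital_linear_map_def by (metis op_scaleC_of_real)

lemma unital: "\<phi> id_blinfun = id_blinfun"
  using positive_unital_linear by (simp add: positive_unital_linear_map_def)

lemma positive: "X \<in> bops \<Longrightarrow> op_pos X \<Longrightarrow> op_pos (\<phi> X)"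
  using positive_unital_linear by (simp add: positive_unital_linear_map_def)

lemma mono:
  assumes "X \<in> bops" "Y \<in> bops" "op_le X Y"
  shows "op_le (\<phi> X) (\<phi> Y)"
proof -
  have "\<phi> Y - \<phi> X = \<phi> (Y - X)"
    using add[of X "Y - X"] assms(1) bops_diff[OF assms(2,1)] by simp
  moreover have "op_pos (\<phi> (Y - X))"
    using assms(3) by (intro positive bops_diff assms(1,2)) (simp add: op_le_def)
  ultimately show ?thesis
    by (simp add: op_le_def)
qed

lemma affine: "X \<in> bops \<Longrightarrow> \<phi> (b *\<^sub>R id_blinfun + a *\<^sub>R X) = b *\<^sub>R id_blinfun + a *\<^sub>R \<phi> X"
  by (simp add: add bops_scaleR bops_id scaleR unital)

lemma op_le_bounds:
  assumes "X \<in> bops" "op_le (m *\<^sub>R id_blinfun) X" "op_le X (M *\<^sub>R id_blinfun)"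
  shows "op_le (m *\<^sub>R id_blinfun) (\<phi> X)" "op_le (\<phi> X) (M *\<^sub>R id_blinfun)"
  using mono[OF bops_scaleR[OF bops_id] assms(1,2)] mono[OF assms(1) bops_scaleR[OF bops_id] assms(3)]
  by (simp_all add: scaleR bops_id unital)

end

theorem corollary2p1:
  fixes A :: "'a::complex_hilbert \<Rightarrow>\<^sub>L 'a"
    and \<phi> :: "('a \<Rightarrow>\<^sub>L 'a) \<Rightarrow> ('b::complex_hilbert \<Rightarrow>\<^sub>L 'b)"
    and m M t :: real
  assumes "0 < m" and "m < M"
    and "A \<in> bops"
    and "op_le (m *\<^sub>R id_blinfun) A" and "op_le A (M *\<^sub>R id_blinfun)"
    and "positive_unital_linear_map \<phi>"
    and "t < 0"
  shows "op_le ((1 / Kconst m M t) *\<^sub>R \<phi> (opfun (\<lambda>x. x powr t) A))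
               ((1 / Kconst m M t) *\<^sub>R \<phi> (opfun (\<lambda>x. (M powr (x - m) * m powr (M - x)) powr (t / (M - m))) A))
       \<and> op_le ((1 / Kconst m M t) *\<^sub>R \<phi> (opfun (\<lambda>x. (M powr (x - m) * m powr (M - x)) powr (t / (M - m))) A))
               (opfun (\<lambda>x. x powr t) (\<phi> A))
       \<and> op_le (opfun (\<lambda>x. x powr t) (\<phi> A))
               (opfun (\<lambda>x. (M powr (x - m) * m powr (M - x)) powr (t / (M - m))) (\<phi> A))
       \<and> op_le (opfun (\<lambda>x. (M powr (x - m) * m powr (M - x)) powr (t / (M - m))) (\<phi> A))
               (Kconst m M t *\<^sub>R \<phi> (opfun (\<lambda>x. x powr t) A))"
proof -
  interpret positive_unital_map \<phi>
    by unfold_locales fact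
  define f g where "f = (\<lambda>x::real. x powr t)"
    and "g = (\<lambda>x::real. (M powr (x - m) * m powr (M - x)) powr (t / (M - m)))"
  define \<alpha> \<beta> where "\<alpha> = (M powr t - m powr t) / (M - m)"
    and "\<beta> = (M * m powr t - m * M powr t) / (M - m)"
  define K where "K = Kconst m M t"
  have "0 < K"
    unfolding K_def using Kconst_pos assms(1,2,7) .
  note spec = op_le_bounds_self_adjoint_spectrum
  note A = opfun_powr_chain[OF assms(3) spec[OF assms(3-5)] assms(1,2,7),
      folded f_def g_def \<alpha>_def \<beta>_def K_def]
  note \<phi>A = opfun_powr_chain[OF maps_bops[OF assms(3)] spec[OF maps_bops[OF assms(3)] op_le_bounds[OF assms(3-5)]]
      assms(1,2,7), folded f_def g_def \<alpha>_def \<beta>_def K_def]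
  have chord: "\<beta> *\<^sub>R id_blinfun + \<alpha> *\<^sub>R A \<in> bops"
    by (intro bops_add bops_scaleR bops_id assms(3))
  have "op_le (\<phi> (opfun g A)) (\<beta> *\<^sub>R id_blinfun + \<alpha> *\<^sub>R \<phi> A)"
    using mono[OF A(5) chord A(2)] by (simp add: affine[OF assms(3)])
  hence "op_le (\<phi> (opfun g A)) (K *\<^sub>R opfun f (\<phi> A))"
    using \<phi>A(3) by (rule op_le_trans)
  moreover have "op_le (\<beta> *\<^sub>R id_blinfun + \<alpha> *\<^sub>R \<phi> A) (K *\<^sub>R \<phi> (opfun f A))"
    using mono[OF chord bops_scaleR[OF A(4)] A(3)] by (simp add: affine[OF assms(3)] scaleR[OF A(4)])
  hence "op_le (opfun g (\<phi> A)) (K *\<^sub>R \<phi> (opfun f A))"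
    using \<phi>A(2) op_le_trans by blast
  ultimately show ?thesis
    using \<open>0 < K\<close> mono[OF A(4,5,1)] \<phi>A(1) unfolding f_def g_def K_def
    by (auto intro: op_le_scaleR op_le_scaleR_divide)
qed

end
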